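(* Let $\Gamma$ be a gain operator on $\ell^\infty_+(\mathcal I)$. If $\Sigma(\Gamma)$ is GATT, then $\Gamma$ satisfies the uniform NJI condition.
   Context: Let $\mathcal I$ be a nonempty countable index set; $\ell^\infty_+(\mathcal I)$ is the cone of nonnegative real families $s=(s_i)_{i\in\mathcal I}$ with $\|s\|:=\sup_i|s_i|<\infty$, ordered componentwise. $\mathcal K_\infty$: continuous strictly increasing unbounded $\gamma:\mathbb R_+\to\mathbb R_+$ with $\gamma(0)=0$. For $\mathcal J\subset\mathcal I$, $s_{|\mathcal J}$ agrees with $s$ on $\mathcal J$ and is $0$ elsewhere. Gain operator: for each $i$ a finite (possibly empty) $\mathcal I_i\subset\mathcal I\setminus\{i\}$; directed graph $\mathcal G$ with vertices $\mathcal I$ and edges $ji$, $j\in\mathcal I_i$; a pointwise equicontinuous family $\gamma_{ij}\in\mathcal K_\infty$ ($ji\in E(\mathcal G)$); functions $\mu_i:\ell^\infty_+(\mathcal I)\to[0,\infty]$ with (M1) some $\xi\in\mathcal K_\infty$ has $\mu_i(0)=0$, $\mu_i(s)\ge\xi(\|s\|)$; (M2) $\mu_i$ monotone; (M3) for each finite $\mathcal J$, $\mu_i$ restricted to vectors vanishing off $\mathcal J$ is finite-valued and continuous; (M4) for each norm-bounded $A$ and $\varepsilon>0$ there is $\delta>0$ with $\sup_i|\mu_i(s_{|\mathcal I_i})-\mu_i(s^0_{|\mathcal I_i})|\le\varepsilon$ whenever $s^0\in A$, $\|s-s^0\|\le\delta$. $\Gamma_i(s):=\mu_i([\gamma_{ij}(s_j)]_{j\in\mathcal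 I_i})$ (argument zero outside $\mathcal I_i$). $\mathcal N^-_i(n)$: vertices $j$ with a directed path from $j$ to $i$ of length at most $n$ ($\mathcal N^-_i(0)=\{i\}$). $\Sigma(\Gamma)$ is the system $s^{n+1}=\Gamma(s^n)$; it is GATT if $\|\Gamma^n(s)\|\to0$ for every $s\in\ell^\infty_+(\mathcal I)$. Uniform NJI condition: for all $r,\varepsilon>0$ there are $n\in\mathbb N$, $\delta>0$ such that for all $s\in\ell^\infty_+(\mathcal I)$, $i\in\mathcal I$ with $s_i\ge\varepsilon$ and $\|s\|\le r$ there is $j\in\mathcal N^-_i(n)$ with $s_j\ge\delta$ and $\Gamma_j(s)<s_j$. *)

theory Defs
  imports "HOL-Analysis.Analysis"
begin

text \<open>Index set: a countable type 'i (types are nonempty).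
  Elements of ell^infty_+(I): nonnegative bounded real families 'i => real.\<close>

definition linf_plus :: "('i \<Rightarrow> real) set" where
  "linf_plus = {s. (\<forall>i. 0 \<le> s i) \<and> bdd_above (range (\<lambda>i. \<bar>s i\<bar>))}"

definition supnorm :: "('i \<Rightarrow> real) \<Rightarrow> real" where
  "supnorm s = (SUP i. \<bar>s i\<bar>)"

definition restr :: "'i set \<Rightarrow> ('i \<Rightarrow> real) \<Rightarrow> ('i \<Rightarrow> real)" where
  "restr J s = (\<lambda>i. if i \<in> J then s i else 0)"

definition K_inf :: "(real \<Rightarrow> real) \<Rightarrow> bool" where
  "K_inf g \<longleftrightarrow> continuous_on {0..} g \<and> strict_mono_on {0..} g \<and> g 0 = 0
     \<and> (\<forall>M. \<exists>r\<ge>0. g r > M)"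

text \<open>Gain operator data: Ii i is the finite set of in-neighbours of i (edge j->i iff j in Ii i),
  gam i j is gamma_ij, mu i is mu_i (values in [0,\<infinity>] as extended reals).\<close>

definition gain_operator ::
  "('i \<Rightarrow> 'i set) \<Rightarrow> ('i \<Rightarrow> 'i \<Rightarrow> real \<Rightarrow> real) \<Rightarrow> ('i \<Rightarrow> ('i \<Rightarrow> real) \<Rightarrow> ereal) \<Rightarrow> bool" where
  "gain_operator Ii gam mu \<longleftrightarrow>
     (\<forall>i. finite (Ii i) \<and> i \<notin> Ii i) \<and>
     (\<forall>i. \<forall>j\<in>Ii i. K_inf (gam i j)) \<and>
     \<comment> \<open>pointwise equicontinuity of the family gamma_ij\<close>
     (\<forall>r\<ge>0. \<forall>e>0. \<exists>d>0. \<forall>i. \<forall>j\<in>Ii i. \<forall>r'\<ge>0.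
         \<bar>r' - r\<bar> < d \<longrightarrow> \<bar>gam i j r' - gam i j r\<bar> < e) \<and>
     \<comment> \<open>values in [0,\<infinity>]\<close>
     (\<forall>i. \<forall>s\<in>linf_plus. 0 \<le> mu i s) \<and>
     \<comment> \<open>(M1)\<close>
     (\<exists>xi. K_inf xi \<and> (\<forall>i. mu i (\<lambda>_. 0) = 0 \<and>
         (\<forall>s\<in>linf_plus. ereal (xi (supnorm s)) \<le> mu i s))) \<and>
     \<comment> \<open>(M2)\<close>
     (\<forall>i. \<forall>s\<in>linf_plus. \<forall>t\<in>linf_plus. (\<forall>k. s k \<le> t k) \<longrightarrow> mu i s \<le> mu i t) \<and>
     \<comment> \<open>(M3)\<close>
     (\<forall>i J. finite J \<longrightarrow>
        (\<forall>s\<in>linf_plus. (\<forall>k. k \<notin> J \<longrightarrow> s k = 0) \<longrightarrow>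
           \<bar>mu i s\<bar> \<noteq> \<infinity> \<and>
           (\<forall>e>0. \<exists>d>0. \<forall>t\<in>linf_plus. (\<forall>k. k \<notin> J \<longrightarrow> t k = 0) \<longrightarrow>
               supnorm (\<lambda>k. t k - s k) < d \<longrightarrow> \<bar>mu i t - mu i s\<bar> < ereal e))) \<and>
     \<comment> \<open>(M4)\<close>
     (\<forall>A\<subseteq>linf_plus. (\<exists>R. \<forall>s\<in>A. supnorm s \<le> R) \<longrightarrow>
        (\<forall>e>0. \<exists>d>0. \<forall>s0\<in>A. \<forall>s\<in>linf_plus. supnorm (\<lambda>k. s k - s0 k) \<le> d \<longrightarrow>
            (\<forall>i. \<bar>mu i (restr (Ii i) s) - mu i (restr (Ii i) s0)\<bar> \<le> ereal e)))"

text \<open>Gamma_i(s) = mu_i([gamma_ij(s_j)]_{j in Ii}) (finite by (M3)).\<close>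

definition Gam ::
  "('i \<Rightarrow> 'i set) \<Rightarrow> ('i \<Rightarrow> 'i \<Rightarrow> real \<Rightarrow> real) \<Rightarrow> ('i \<Rightarrow> ('i \<Rightarrow> real) \<Rightarrow> ereal)
     \<Rightarrow> ('i \<Rightarrow> real) \<Rightarrow> ('i \<Rightarrow> real)" where
  "Gam Ii gam mu s = (\<lambda>i. real_of_ereal (mu i (\<lambda>j. if j \<in> Ii i then gam i j (s j) else 0)))"

fun walk :: "('i \<Rightarrow> 'i set) \<Rightarrow> nat \<Rightarrow> 'i \<Rightarrow> 'i \<Rightarrow> bool" where
  "walk Ii 0 j i = (j = i)"
| "walk Ii (Suc k) j i = (\<exists>l\<in>Ii i. walk Ii k j l)"

definition Nminus :: "('i \<Rightarrow> 'i set) \<Rightarrow> 'i \<Rightarrow> nat \<Rightarrow> 'i set" where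
  "Nminus Ii i n = {j. \<exists>k\<le>n. walk Ii k j i}"

definition GATT :: "(('i \<Rightarrow> real) \<Rightarrow> ('i \<Rightarrow> real)) \<Rightarrow> bool" where
  "GATT G \<longleftrightarrow> (\<forall>s\<in>linf_plus. (\<lambda>n. supnorm ((G ^^ n) s)) \<longlonglongrightarrow> 0)"

definition uniform_NJI ::
  "('i \<Rightarrow> 'i set) \<Rightarrow> (('i \<Rightarrow> real) \<Rightarrow> ('i \<Rightarrow> real)) \<Rightarrow> bool" where
  "uniform_NJI Ii G \<longleftrightarrow>
     (\<forall>r>0. \<forall>e>0. \<exists>n::nat. \<exists>d>0. \<forall>s\<in>linf_plus. \<forall>i.
        e \<le> s i \<and> supnorm s \<le> r \<longrightarrow>
        (\<exists>j\<in>Nminus Ii i n. d \<le> s j \<and> G s j < s j))"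

end

(*
  Fix r, e > 0. Since \<Gamma> is monotone, GATT applied to the constant family r yields one K with
  \<Gamma>^K s < e/2 on the whole order interval [0, r]. By (M4) and the uniform equicontinuity of the
  \<gamma>_ij on compact intervals, \<Gamma> is uniformly lower semicontinuous on bounded sets; an induction
  on K then shows: for every \<eta> > 0 there is \<delta> > 0 such that (\<Gamma>^K s)_i \<ge> s_i - \<eta> unless some
  j \<in> N^-_i(K) with s_j \<ge> \<delta> has \<Gamma>_j(s) < s_j. With \<eta> = e/2 and s_i \<ge> e the first
  alternative contradicts \<Gamma>^K s < e/2, so such a j exists.
*)

theory Submission
  imports Defs
begin

definition cube :: "real \<Rightarrow> ('i \<Rightarrow> real) set" where
  "cube C = {s. \<forall>k. 0 \<le> s k \<and> s k \<le> C}"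

lemma linf_plus_le_supnorm: "s \<in> linf_plus \<Longrightarrow> s k \<le> supnorm s"
  unfolding linf_plus_def supnorm_def
  by (metis (mono_tags, lifting) abs_of_nonneg cSUP_upper mem_Collect_eq UNIV_I)

lemma cube_subset_linf_plus: "cube C \<subseteq> linf_plus"
  unfolding cube_def linf_plus_def by (auto intro!: bdd_aboveI[of _ C])

lemma linf_plus_in_cube_iff:
  assumes "s \<in> linf_plus"
  shows "s \<in> cube C \<longleftrightarrow> supnorm s \<le> C"
proof
  show "s \<in> cube C \<Longrightarrow> supnorm s \<le> C"
    unfolding cube_def supnorm_def by (auto intro!: cSUP_least)
  show "supnorm s \<le> C \<Longrightarrow> s \<in> cube C"
    using assms linf_plus_le_supnorm[OF assms] unfolding cube_def linf_plus_def
    by (auto intro: order_trans)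
qed

lemma restr_linf_plus: "finite J \<Longrightarrow> (\<And>k. k \<in> J \<Longrightarrow> 0 \<le> s k) \<Longrightarrow> restr J s \<in> linf_plus"
proof -
  assume "finite J" "\<And>k. k \<in> J \<Longrightarrow> 0 \<le> s k"
  moreover have "range (\<lambda>k. \<bar>restr J s k\<bar>) \<subseteq> insert 0 ((\<lambda>k. \<bar>s k\<bar>) ` J)"
    unfolding restr_def by auto
  ultimately show ?thesis
    unfolding linf_plus_def restr_def
    by (auto intro: bdd_above_mono bdd_above_finite[OF finite_insert[THEN iffD2, OF finite_imageI]])
qed

lemma restr_restr: "restr J (restr J s) = restr J s"
  by (simp add: restr_def fun_eq_iff)

lemma self_in_Nminus: "i \<in> Nminus Ii i n"
  unfolding Nminus_def by force

lemma Nminus_in_neighbour_subset: "l \<in> Ii j \<Longrightarrow> Nminus Ii l m \<subseteq> Nminus Ii j (Suc m)"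
  unfolding Nminus_def by fastforce

lemma bounded_by_small_steps:
  fixes f :: "real \<Rightarrow> real"
  assumes "0 < d"
    and step: "\<And>x y. 0 \<le> y \<Longrightarrow> y \<le> x \<Longrightarrow> x \<le> C \<Longrightarrow> x - y < d \<Longrightarrow> f x \<le> f y + 1"
    and "x \<in> {0..C}"
  shows "f x \<le> f 0 + 2 * C / d + 1"
proof -
  have chain: "f x \<le> f 0 + real n" if "x \<in> {0..C}" "x \<le> real n * (d / 2)" for n x
    using that
  proof (induction n arbitrary: x)
    case 0
    then show ?case by simp
  next
    case (Suc n)
    define y where "y = max 0 (x - d / 2)"
    have "y \<in> {0..C}" "y \<le> real n * (d / 2)"
      using Suc.prems \<open>0 < d\<close> by (auto simp: y_def algebra_simps max_def)
    then have "f y \<le> f 0 + real n" by (rule Suc.IH)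
    moreover have "f x \<le> f y + 1"
      using Suc.prems \<open>0 < d\<close> by (intro step) (auto simp: y_def)
    ultimately show ?case by simp
  qed
  define n where "n = nat \<lceil>2 * C / d\<rceil>"
  have "2 * C / d \<le> real n" "real n \<le> 2 * C / d + 1"
    using assms(3) \<open>0 < d\<close> unfolding n_def by (auto simp: of_nat_nat)
  then have "x \<le> real n * (d / 2)"
    using assms(3) \<open>0 < d\<close> by (simp add: field_simps)
  with chain[OF assms(3)] \<open>real n \<le> 2 * C / d + 1\<close> show ?thesis
    by fastforce
qed

locale gain_system =
  fixes Ii :: "'i \<Rightarrow> 'i set"
    and gam :: "'i \<Rightarrow> 'i \<Rightarrow> real \<Rightarrow> real"
    and mu :: "'i \<Rightarrow> ('i \<Rightarrow> real) \<Rightarrow> ereal"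
  assumes gain_operator: "gain_operator Ii gam mu"
begin

abbreviation \<Gamma> :: "('i \<Rightarrow> real) \<Rightarrow> ('i \<Rightarrow> real)" where
  "\<Gamma> \<equiv> Gam Ii gam mu"

lemma finite_Ii: "finite (Ii i)"
  using gain_operator[unfolded gain_operator_def, THEN conjunct1] by blast

lemma K_inf_gam: "j \<in> Ii i \<Longrightarrow> K_inf (gam i j)"
  using gain_operator[unfolded gain_operator_def, THEN conjunct2, THEN conjunct1] by blast

lemma gam_equicontinuous_at:
  "0 \<le> x \<Longrightarrow> 0 < e \<Longrightarrow>
    \<exists>d>0. \<forall>i. \<forall>j\<in>Ii i. \<forall>y\<ge>0. \<bar>y - x\<bar> < d \<longrightarrow> \<bar>gam i j y - gam i j x\<bar> < e"
  using gain_operator[unfolded gain_operator_def, THEN conjunct2, THEN conjunct2, THEN conjunct1]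
  by blast

lemma mu_nonneg: "s \<in> linf_plus \<Longrightarrow> 0 \<le> mu i s"
  using gain_operator[unfolded gain_operator_def, THEN conjunct2, THEN conjunct2, THEN conjunct2,
      THEN conjunct1] by blast

lemma mu_zero: "mu i (\<lambda>_. 0) = 0"
  using gain_operator[unfolded gain_operator_def, THEN conjunct2, THEN conjunct2, THEN conjunct2,
      THEN conjunct2, THEN conjunct1] by blast

lemma mu_mono: "s \<in> linf_plus \<Longrightarrow> t \<in> linf_plus \<Longrightarrow> (\<And>k. s k \<le> t k) \<Longrightarrow> mu i s \<le> mu i t"
  by (rule gain_operator[unfolded gain_operator_def, THEN conjunct2, THEN conjunct2, THEN conjunct2,
        THEN conjunct2, THEN conjunct2, THEN conjunct1, rule_format])

lemma mu_finite:
  "finite J \<Longrightarrow> s \<in> linf_plus \<Longrightarrow> (\<And>k. k \<notin> J \<Longrightarrow> s k = 0) \<Longrightarrow> \<bar>mu i s\<bar> \<noteq> \<infinity>"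
  by (rule gain_operator[unfolded gain_operator_def, THEN conjunct2, THEN conjunct2, THEN conjunct2,
        THEN conjunct2, THEN conjunct2, THEN conjunct2, THEN conjunct1, rule_format, THEN conjunct1])

lemma mu_uniformly_continuous_on_cube:
  assumes "0 < e"
  shows "\<exists>d>0. \<forall>s0\<in>cube C. \<forall>s\<in>linf_plus. supnorm (\<lambda>k. s k - s0 k) \<le> d \<longrightarrow>
    (\<forall>i. \<bar>mu i (restr (Ii i) s) - mu i (restr (Ii i) s0)\<bar> \<le> ereal e)"
proof -
  have M4: "\<forall>A\<subseteq>linf_plus. (\<exists>R. \<forall>s\<in>A. supnorm s \<le> R) \<longrightarrow>
      (\<forall>e>0. \<exists>d>0. \<forall>s0\<in>A. \<forall>s\<in>linf_plus. supnorm (\<lambda>k. s k - s0 k) \<le> d \<longrightarrow>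
        (\<forall>i. \<bar>mu i (restr (Ii i) s) - mu i (restr (Ii i) s0)\<bar> \<le> ereal e))"
    using gain_operator[unfolded gain_operator_def, THEN conjunct2, THEN conjunct2, THEN conjunct2,
        THEN conjunct2, THEN conjunct2, THEN conjunct2, THEN conjunct2] .
  have "\<exists>R. \<forall>s\<in>cube C. supnorm s \<le> R"
    using cube_subset_linf_plus linf_plus_in_cube_iff by blast
  then show ?thesis
    by (rule M4[rule_format, OF cube_subset_linf_plus _ assms])
qed

lemma gam_zero: "j \<in> Ii i \<Longrightarrow> gam i j 0 = 0"
  using K_inf_gam[of j i] unfolding K_inf_def by blast

lemma gam_mono:
  assumes "j \<in> Ii i" "0 \<le> x" "x \<le> y"
  shows "gam i j x \<le> gam i j y"
proof -
  have "strict_mono_on {0..} (gam i j)"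
    using K_inf_gam[OF assms(1)] unfolding K_inf_def by blast
  then show ?thesis
    by (rule strict_mono_on_leD) (use assms in auto)
qed

lemma gam_nonneg: "j \<in> Ii i \<Longrightarrow> 0 \<le> x \<Longrightarrow> 0 \<le> gam i j x"
  using gam_mono[of j i 0 x] gam_zero by simp

lemma gam_uniformly_equicontinuous:
  assumes "0 < e"
  obtains d where "0 < d"
    and "\<And>i j x y. j \<in> Ii i \<Longrightarrow> x \<in> {0..R} \<Longrightarrow> y \<in> {0..R} \<Longrightarrow> \<bar>y - x\<bar> < d \<Longrightarrow>
      \<bar>gam i j y - gam i j x\<bar> < e"
proof -
  let ?F = "{gam i j | i j. j \<in> Ii i}"
  have cont: "\<exists>d>0. \<forall>f\<in>?F. \<forall>y\<in>{0..R}. dist y x < d \<longrightarrow> dist (f y) (f x) < e'"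
    if x: "x \<in> {0..R}" and e': "0 < e'" for x e'
  proof -
    have "0 \<le> x"
      using x by simp
    then obtain d where "0 < d"
      and "\<forall>i. \<forall>j\<in>Ii i. \<forall>y\<ge>0. \<bar>y - x\<bar> < d \<longrightarrow> \<bar>gam i j y - gam i j x\<bar> < e'"
      using gam_equicontinuous_at[OF _ e'] by blast
    then show ?thesis
      by (intro exI[of _ d]) (auto simp: dist_real_def)
  qed
  obtain d where "0 < d"
    and d: "\<And>f x y. f \<in> ?F \<Longrightarrow> x \<in> {0..R} \<Longrightarrow> y \<in> {0..R} \<Longrightarrow> dist y x < d \<Longrightarrow> dist (f y) (f x) < e"
    using compact_uniformly_equicontinuous[OF compact_Icc cont assms] by blast
  show thesis
  proof (rule that[OF \<open>0 < d\<close>])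
    fix i j x y
    assume "j \<in> Ii i" "x \<in> {0..R}" "y \<in> {0..R}" "\<bar>y - x\<bar> < d"
    then have "dist (gam i j y) (gam i j x) < e"
      by (intro d) (auto simp: dist_real_def)
    then show "\<bar>gam i j y - gam i j x\<bar> < e"
      by (simp add: dist_real_def)
  qed
qed

lemma gam_uniformly_bounded: "\<exists>B\<ge>0. \<forall>i. \<forall>j\<in>Ii i. \<forall>x\<in>{0..R}. gam i j x \<le> B"
proof -
  obtain d where "0 < d" and d: "\<And>i j x y. j \<in> Ii i \<Longrightarrow> x \<in> {0..R} \<Longrightarrow> y \<in> {0..R} \<Longrightarrow>
      \<bar>y - x\<bar> < d \<Longrightarrow> \<bar>gam i j y - gam i j x\<bar> < 1"
    using gam_uniformly_equicontinuous[where R = R, OF zero_less_one] by blast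
  have "gam i j x \<le> 2 * R / d + 1" if "j \<in> Ii i" "x \<in> {0..R}" for i j x
  proof -
    have step: "gam i j x' \<le> gam i j y + 1" if "0 \<le> y" "y \<le> x'" "x' \<le> R" "x' - y < d" for x' y
    proof -
      have "\<bar>gam i j x' - gam i j y\<bar> < 1"
        by (rule d[OF \<open>j \<in> Ii i\<close>]) (use that in auto)
      then show ?thesis by (simp add: abs_less_iff)
    qed
    show ?thesis
      using bounded_by_small_steps[where f = "gam i j", OF \<open>0 < d\<close> step \<open>x \<in> {0..R}\<close>]
      by (simp add: gam_zero[OF \<open>j \<in> Ii i\<close>])
  qed
  then show ?thesis
    by (intro exI[of _ "max 0 (2 * R / d + 1)"]) (auto intro: max.coboundedI2)
qed

text \<open>By (M3) \<open>mu i (restr (Ii i) s)\<close> is finite for \<open>s \<ge> 0\<close> on \<open>Ii i\<close>, so \<open>real_of_ereal\<close>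
  loses nothing there; outside that range \<open>mu_restr\<close> is a junk value.\<close>

definition mu_restr :: "'i \<Rightarrow> ('i \<Rightarrow> real) \<Rightarrow> real" where
  "mu_restr i s = real_of_ereal (mu i (restr (Ii i) s))"

lemma mu_restr_eq:
  assumes "\<And>k. k \<in> Ii i \<Longrightarrow> 0 \<le> s k"
  shows "mu i (restr (Ii i) s) = ereal (mu_restr i s)"
proof -
  have "restr (Ii i) s \<in> linf_plus"
    using restr_linf_plus[OF finite_Ii] assms by blast
  then have "\<bar>mu i (restr (Ii i) s)\<bar> \<noteq> \<infinity>"
    by (rule mu_finite[OF finite_Ii[of i]]) (simp add: restr_def)
  then show ?thesis
    by (simp add: mu_restr_def ereal_real')
qed

lemma mu_restr_nonneg: "(\<And>k. k \<in> Ii i \<Longrightarrow> 0 \<le> s k) \<Longrightarrow> 0 \<le> mu_restr i s"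
  unfolding mu_restr_def
  by (simp add: mu_nonneg restr_linf_plus[OF finite_Ii] real_of_ereal_pos)

lemma mu_restr_mono:
  assumes "\<And>k. k \<in> Ii i \<Longrightarrow> 0 \<le> s k" and "\<And>k. k \<in> Ii i \<Longrightarrow> s k \<le> t k"
  shows "mu_restr i s \<le> mu_restr i t"
proof -
  have "\<And>k. k \<in> Ii i \<Longrightarrow> 0 \<le> t k"
    using assms by force
  then have "mu i (restr (Ii i) s) \<le> mu i (restr (Ii i) t)"
    using assms by (intro mu_mono restr_linf_plus[OF finite_Ii]) (auto simp: restr_def)
  with assms \<open>\<And>k. k \<in> Ii i \<Longrightarrow> 0 \<le> t k\<close> show ?thesis
    by (simp add: mu_restr_eq)
qed

lemma mu_restr_zero: "mu_restr i (\<lambda>_. 0) = 0"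
  by (simp add: mu_restr_def restr_def mu_zero)

lemma mu_restr_uniformly_continuous_on_cube:
  assumes "0 < e"
  obtains d where "0 < d"
    and "\<And>i s0 s. s0 \<in> cube C \<Longrightarrow> (\<And>k. 0 \<le> s k) \<Longrightarrow> (\<And>k. \<bar>s k - s0 k\<bar> \<le> d) \<Longrightarrow>
      \<bar>mu_restr i s - mu_restr i s0\<bar> \<le> e"
proof -
  obtain d where "0 < d" and d: "\<forall>s0\<in>cube C. \<forall>s\<in>linf_plus. supnorm (\<lambda>k. s k - s0 k) \<le> d \<longrightarrow>
      (\<forall>i. \<bar>mu i (restr (Ii i) s) - mu i (restr (Ii i) s0)\<bar> \<le> ereal e)"
    using mu_uniformly_continuous_on_cube[OF assms] by blast
  show thesis
  proof (rule that[OF \<open>0 < d\<close>])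
    fix i and s0 s :: "'i \<Rightarrow> real"
    assume s0: "s0 \<in> cube C" and s: "\<And>k. 0 \<le> s k" "\<And>k. \<bar>s k - s0 k\<bar> \<le> d"
    have "s k \<le> C + d" for k
    proof -
      have "s0 k \<le> C"
        using s0 by (simp add: cube_def)
      then show ?thesis
        using abs_le_D1[OF s(2)[of k]] by linarith
    qed
    with s(1) have "s \<in> linf_plus"
      using cube_subset_linf_plus unfolding cube_def by blast
    moreover have "supnorm (\<lambda>k. s k - s0 k) \<le> d"
      unfolding supnorm_def using s(2) by (intro cSUP_least) auto
    ultimately have "\<bar>mu i (restr (Ii i) s) - mu i (restr (Ii i) s0)\<bar> \<le> ereal e"
      using d s0 by simp
    moreover have "\<And>k. 0 \<le> s0 k"
      using s0 unfolding cube_def by blast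
    ultimately show "\<bar>mu_restr i s - mu_restr i s0\<bar> \<le> e"
      using s(1) by (simp add: mu_restr_eq)
  qed
qed

lemma mu_restr_const_bounded: "\<exists>B. \<forall>i. \<forall>c\<in>{0..C}. mu_restr i (\<lambda>_. c) \<le> B"
proof -
  obtain d where "0 < d" and d: "\<And>i s0 s. s0 \<in> cube C \<Longrightarrow> (\<And>k. 0 \<le> s k) \<Longrightarrow>
      (\<And>k. \<bar>s k - s0 k\<bar> \<le> d) \<Longrightarrow> \<bar>mu_restr i s - mu_restr i s0\<bar> \<le> 1"
    using mu_restr_uniformly_continuous_on_cube[where C = C, OF zero_less_one] by blast
  have "mu_restr i (\<lambda>_. c) \<le> 2 * C / d + 1" if "c \<in> {0..C}" for i c
  proof -
    have step: "mu_restr i (\<lambda>_. x) \<le> mu_restr i (\<lambda>_. y) + 1"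
      if "0 \<le> y" "y \<le> x" "x \<le> C" "x - y < d" for x y
    proof -
      have "\<bar>mu_restr i (\<lambda>_. x) - mu_restr i (\<lambda>_. y)\<bar> \<le> 1"
        by (rule d) (use that in \<open>auto simp: cube_def\<close>)
      then show ?thesis by (simp add: abs_le_iff)
    qed
    show ?thesis
      using bounded_by_small_steps[where f = "\<lambda>x. mu_restr i (\<lambda>_. x)", OF \<open>0 < d\<close> step \<open>c \<in> {0..C}\<close>]
      by (simp add: mu_restr_zero)
  qed
  then show ?thesis by blast
qed

lemma Gam_eq_mu_restr: "\<Gamma> s i = mu_restr i (\<lambda>j. gam i j (s j))"
  by (simp add: Gam_def mu_restr_def restr_def)

lemma Gam_nonneg: "(\<And>k. 0 \<le> s k) \<Longrightarrow> 0 \<le> \<Gamma> s i"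
  by (simp add: Gam_eq_mu_restr mu_restr_nonneg gam_nonneg)

lemma Gam_mono: "(\<And>k. 0 \<le> s k) \<Longrightarrow> (\<And>k. s k \<le> t k) \<Longrightarrow> \<Gamma> s i \<le> \<Gamma> t i"
  unfolding Gam_eq_mu_restr by (rule mu_restr_mono) (auto intro: gam_nonneg gam_mono)

lemma Gam_bounded_on_cube: "\<exists>B. \<forall>s\<in>cube R. \<forall>i. \<Gamma> s i \<le> B"
proof -
  obtain C where "0 \<le> C" and C: "\<forall>i. \<forall>j\<in>Ii i. \<forall>x\<in>{0..R}. gam i j x \<le> C"
    using gam_uniformly_bounded by blast
  obtain B where B: "\<forall>i. \<forall>c\<in>{0..C}. mu_restr i (\<lambda>_. c) \<le> B"
    using mu_restr_const_bounded by blast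
  have "\<Gamma> s i \<le> B" if "s \<in> cube R" for s i
  proof -
    have "\<Gamma> s i \<le> mu_restr i (\<lambda>_. C)"
      unfolding Gam_eq_mu_restr using that C
      by (intro mu_restr_mono) (auto simp: cube_def intro: gam_nonneg)
    also have "\<dots> \<le> B"
      using B \<open>0 \<le> C\<close> by simp
    finally show ?thesis .
  qed
  then show ?thesis by blast
qed

lemma Gam_linf_plus: "s \<in> linf_plus \<Longrightarrow> \<Gamma> s \<in> linf_plus"
proof -
  assume "s \<in> linf_plus"
  then have "s \<in> cube (supnorm s)"
    by (simp add: linf_plus_in_cube_iff)
  moreover obtain B where "\<forall>s\<in>cube (supnorm s). \<forall>i. \<Gamma> s i \<le> B"
    using Gam_bounded_on_cube by blast
  ultimately have "\<Gamma> s \<in> cube B"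
    using \<open>s \<in> cube (supnorm s)\<close> Gam_nonneg unfolding cube_def by blast
  then show ?thesis
    using cube_subset_linf_plus by blast
qed

lemma Gam_lower_uniformly_continuous_on_cube:
  assumes "0 < \<eta>"
  obtains \<delta> where "0 < \<delta>"
    and "\<And>s t i. s \<in> cube R \<Longrightarrow> (\<And>k. 0 \<le> t k) \<Longrightarrow> (\<And>k. k \<in> Ii i \<Longrightarrow> s k - \<delta> \<le> t k) \<Longrightarrow>
      \<Gamma> s i - \<eta> \<le> \<Gamma> t i"
proof -
  obtain C where "0 \<le> C" and C: "\<forall>i. \<forall>j\<in>Ii i. \<forall>x\<in>{0..R}. gam i j x \<le> C"
    using gam_uniformly_bounded by blast
  obtain d2 where "0 < d2" and d2: "\<And>i s0 s. s0 \<in> cube C \<Longrightarrow> (\<And>k. 0 \<le> s k) \<Longrightarrow>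
      (\<And>k. \<bar>s k - s0 k\<bar> \<le> d2) \<Longrightarrow> \<bar>mu_restr i s - mu_restr i s0\<bar> \<le> \<eta>"
    using mu_restr_uniformly_continuous_on_cube[OF assms] by blast
  obtain d1 where "0 < d1" and d1: "\<And>i j x y. j \<in> Ii i \<Longrightarrow> x \<in> {0..R} \<Longrightarrow> y \<in> {0..R} \<Longrightarrow>
      \<bar>y - x\<bar> < d1 \<Longrightarrow> \<bar>gam i j y - gam i j x\<bar> < d2"
    using gam_uniformly_equicontinuous[OF \<open>0 < d2\<close>] by blast
  show thesis
  proof (rule that[of "d1 / 2"])
    show "0 < d1 / 2"
      using \<open>0 < d1\<close> by simp
    fix s t :: "'i \<Rightarrow> real" and i
    assume s: "s \<in> cube R" and t: "\<And>k. 0 \<le> t k" and st: "\<And>k. k \<in> Ii i \<Longrightarrow> s k - d1 / 2 \<le> t k"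
    define v where "v = restr (Ii i) (\<lambda>k. gam i k (s k))"
    define w where "w = (\<lambda>k. max (v k - d2) 0)"
    have s_bounds: "0 \<le> s k" "s k \<le> R" for k
      using s by (auto simp: cube_def)
    have "v \<in> cube C"
      using C s_bounds \<open>0 \<le> C\<close> by (auto simp: v_def restr_def cube_def intro: gam_nonneg)
    have "\<Gamma> s i = mu_restr i v"
      by (simp add: Gam_eq_mu_restr mu_restr_def restr_restr v_def)
    also have "\<dots> \<le> mu_restr i w + \<eta>"
    proof -
      have "v k \<ge> 0" for k
        using \<open>v \<in> cube C\<close> by (simp add: cube_def)
      then have "\<bar>w k - v k\<bar> \<le> d2" for k
        using \<open>0 < d2\<close> by (simp add: w_def abs_le_iff)
      then have "\<bar>mu_restr i w - mu_restr i v\<bar> \<le> \<eta>"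
        by (intro d2[OF \<open>v \<in> cube C\<close>]) (simp add: w_def)
      then show ?thesis
        by (simp add: abs_le_iff)
    qed
    also have "mu_restr i w \<le> \<Gamma> t i"
      unfolding Gam_eq_mu_restr
    proof (rule mu_restr_mono)
      fix k assume "k \<in> Ii i"
      show "0 \<le> w k"
        by (simp add: w_def)
      define y where "y = max (s k - d1 / 2) 0"
      have "\<bar>gam i k y - gam i k (s k)\<bar> < d2"
        using \<open>0 < d1\<close> s_bounds[of k] by (intro d1[OF \<open>k \<in> Ii i\<close>]) (auto simp: y_def)
      moreover have "gam i k y \<le> gam i k (t k)"
        using \<open>k \<in> Ii i\<close> st t by (intro gam_mono) (auto simp: y_def)
      ultimately show "w k \<le> gam i k (t k)"
        using gam_nonneg[OF \<open>k \<in> Ii i\<close> t] \<open>k \<in> Ii i\<close>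
        by (auto simp: w_def v_def restr_def)
    qed
    finally show "\<Gamma> s i - \<eta> \<le> \<Gamma> t i"
      by simp
  qed
qed

lemma Gam_iterate_nonneg: "(\<And>k. 0 \<le> s k) \<Longrightarrow> 0 \<le> (\<Gamma> ^^ n) s k"
  by (induction n arbitrary: k) (auto intro: Gam_nonneg)

lemma Gam_iterate_mono:
  "(\<And>k. 0 \<le> s k) \<Longrightarrow> (\<And>k. s k \<le> t k) \<Longrightarrow> (\<Gamma> ^^ n) s k \<le> (\<Gamma> ^^ n) t k"
  by (induction n arbitrary: k) (auto intro: Gam_mono Gam_iterate_nonneg)

lemma Gam_iterate_linf_plus: "s \<in> linf_plus \<Longrightarrow> (\<Gamma> ^^ n) s \<in> linf_plus"
  by (induction n) (auto intro: Gam_linf_plus)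

lemma Gam_iterate_ge_if_no_nearby_decrease:
  assumes "0 < \<eta>"
  shows "\<exists>\<delta>>0. \<forall>s\<in>cube R. \<forall>j. (\<forall>l\<in>Nminus Ii j m. \<delta> \<le> s l \<longrightarrow> s l \<le> \<Gamma> s l) \<longrightarrow>
    s j - \<eta> \<le> (\<Gamma> ^^ m) s j"
  using assms
proof (induction m arbitrary: \<eta>)
  case 0
  then show ?case by auto
next
  case (Suc m)
  obtain \<delta>1 where "0 < \<delta>1" and \<delta>1: "\<And>s t i. s \<in> cube R \<Longrightarrow> (\<And>k. 0 \<le> t k) \<Longrightarrow>
      (\<And>k. k \<in> Ii i \<Longrightarrow> s k - \<delta>1 \<le> t k) \<Longrightarrow> \<Gamma> s i - \<eta> / 2 \<le> \<Gamma> t i"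
    using Gam_lower_uniformly_continuous_on_cube[of "\<eta> / 2" R] Suc.prems by auto
  obtain \<delta> where "0 < \<delta>" and \<delta>: "\<forall>s\<in>cube R. \<forall>j. (\<forall>l\<in>Nminus Ii j m. \<delta> \<le> s l \<longrightarrow> s l \<le> \<Gamma> s l) \<longrightarrow>
      s j - \<delta>1 \<le> (\<Gamma> ^^ m) s j"
    using Suc.IH[OF \<open>0 < \<delta>1\<close>] by blast
  have "s j - \<eta> \<le> (\<Gamma> ^^ Suc m) s j"
    if s: "s \<in> cube R"
      and no_decrease: "\<forall>l\<in>Nminus Ii j (Suc m). min \<delta> (\<eta> / 2) \<le> s l \<longrightarrow> s l \<le> \<Gamma> s l"
    for s j
  proof -
    have s_nonneg: "0 \<le> s k" for k
      using s by (simp add: cube_def)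
    have "s l - \<delta>1 \<le> (\<Gamma> ^^ m) s l" if "l \<in> Ii j" for l
    proof -
      have "s l' \<le> \<Gamma> s l'" if "l' \<in> Nminus Ii l m" "\<delta> \<le> s l'" for l'
      proof -
        have "l' \<in> Nminus Ii j (Suc m)"
          using Nminus_in_neighbour_subset[where Ii = Ii, OF \<open>l \<in> Ii j\<close>] that(1) by blast
        moreover have "min \<delta> (\<eta> / 2) \<le> s l'"
          using that(2) by (simp add: min.coboundedI1)
        ultimately show ?thesis
          using no_decrease by blast
      qed
      then show ?thesis
        using \<delta> s by blast
    qed
    then have "\<Gamma> s j - \<eta> / 2 \<le> (\<Gamma> ^^ Suc m) s j"
      using \<delta>1[OF s] Gam_iterate_nonneg[of s, OF s_nonneg] by simp
    moreover have "s j - \<eta> / 2 \<le> \<Gamma> s j"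
    proof (cases "min \<delta> (\<eta> / 2) \<le> s j")
      case True
      then show ?thesis
        using no_decrease self_in_Nminus Suc.prems by fastforce
    next
      case False
      \<comment> \<open>nodes carrying less than \<open>\<eta> / 2\<close> are harmless since \<open>\<Gamma>\<close> is nonnegative\<close>
      then show ?thesis
        using Gam_nonneg[of s j, OF s_nonneg] min.cobounded2[of \<delta> "\<eta> / 2"] by linarith
    qed
    ultimately show ?thesis by simp
  qed
  then show ?case
    using \<open>0 < \<delta>\<close> Suc.prems by (intro exI[of _ "min \<delta> (\<eta> / 2)"]) auto
qed

lemma Gam_iterate_uniformly_small_on_cube:
  assumes "GATT \<Gamma>" "0 \<le> r" "0 < e"
  obtains K where "\<And>s i. s \<in> cube r \<Longrightarrow> (\<Gamma> ^^ K) s i < e"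
proof -
  define z :: "'i \<Rightarrow> real" where "z = (\<lambda>_. r)"
  have "z \<in> linf_plus"
    using \<open>0 \<le> r\<close> cube_subset_linf_plus by (force simp: z_def cube_def)
  with assms(1) have "(\<lambda>n. supnorm ((\<Gamma> ^^ n) z)) \<longlonglongrightarrow> 0"
    unfolding GATT_def by blast
  then have "eventually (\<lambda>n. supnorm ((\<Gamma> ^^ n) z) < e) sequentially"
    using \<open>0 < e\<close> by (intro order_tendstoD(2)) auto
  then obtain K where "supnorm ((\<Gamma> ^^ K) z) < e"
    unfolding eventually_sequentially by blast
  then have z_small: "(\<Gamma> ^^ K) z i < e" for i
    using linf_plus_le_supnorm[OF Gam_iterate_linf_plus[OF \<open>z \<in> linf_plus\<close>]] le_less_trans by blast
  show thesis
  proof (rule that)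
    fix s :: "'i \<Rightarrow> real" and i
    assume "s \<in> cube r"
    then have "(\<Gamma> ^^ K) s i \<le> (\<Gamma> ^^ K) z i"
      by (intro Gam_iterate_mono) (auto simp: cube_def z_def)
    with z_small show "(\<Gamma> ^^ K) s i < e"
      by (rule le_less_trans[rotated])
  qed
qed

end

theorem proposition2p19:
  fixes Ii :: "'i::countable \<Rightarrow> 'i set"
    and gam :: "'i \<Rightarrow> 'i \<Rightarrow> real \<Rightarrow> real"
    and mu :: "'i \<Rightarrow> ('i \<Rightarrow> real) \<Rightarrow> ereal"
  assumes "gain_operator Ii gam mu"
    and "GATT (Gam Ii gam mu)"
  shows "uniform_NJI Ii (Gam Ii gam mu)"
  unfolding uniform_NJI_def
proof (intro allI impI)
  interpret gain_system Ii gam mu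
    by (rule gain_system.intro) (fact assms(1))
  fix r e :: real
  assume "0 < r" "0 < e"
  obtain K where small: "\<And>s i. s \<in> cube r \<Longrightarrow> (\<Gamma> ^^ K) s i < e / 2"
    using Gam_iterate_uniformly_small_on_cube[OF assms(2) less_imp_le[OF \<open>0 < r\<close>] half_gt_zero[OF \<open>0 < e\<close>]]
    by blast
  obtain \<delta> where "0 < \<delta>" and \<delta>: "\<forall>s\<in>cube r. \<forall>j. (\<forall>l\<in>Nminus Ii j K. \<delta> \<le> s l \<longrightarrow> s l \<le> \<Gamma> s l) \<longrightarrow>
      s j - e / 2 \<le> (\<Gamma> ^^ K) s j"
    using Gam_iterate_ge_if_no_nearby_decrease[of "e / 2" r K] \<open>0 < e\<close> by auto
  have "\<exists>j\<in>Nminus Ii i K. \<delta> \<le> s j \<and> \<Gamma> s j < s j"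
    if "s \<in> linf_plus" "e \<le> s i \<and> supnorm s \<le> r" for s i
  proof (rule ccontr)
    assume "\<not> ?thesis"
    moreover have "s \<in> cube r"
      using that by (simp add: linf_plus_in_cube_iff)
    ultimately have "s i - e / 2 \<le> (\<Gamma> ^^ K) s i"
      using \<delta> by (auto simp: not_less)
    then show False
      using small[OF \<open>s \<in> cube r\<close>, of i] that(2) by linarith
  qed
  then show "\<exists>n d. 0 < d \<and> (\<forall>s\<in>linf_plus. \<forall>i. e \<le> s i \<and> supnorm s \<le> r \<longrightarrow>
      (\<exists>j\<in>Nminus Ii i n. d \<le> s j \<and> Gam Ii gam mu s j < s j))"
    using \<open>0 < \<delta>\<close> by blast
qed

end
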